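(* Let $\alpha\in(1,2)$ and let $X_1$ be a random variable with characteristic function $\mathbb{E}e^{itX_1}=\exp\left(\int_0^1(e^{itx}-1-itx)\frac{dx}{x^{\alpha+1}}\right)$. Put $A_\alpha=\frac{1}{2-\alpha}+\frac{1}{\alpha-1}$. Then for every $y\ge\frac{2}{2-\alpha}$, $$\mathbb{P}(X_1\le-y)\le\exp\left(-\frac{\left(\frac12\left(y+\frac{1}{\alpha-1}\right)\right)^{\alpha/(\alpha-1)}}{A_\alpha^{1/(\alpha-1)}}\right)$$ and $$\mathbb{P}\Big(X_1\le-\Big(\frac1e-\frac14\Big)y\Big)\ge\Big(1-\frac{1}{\sqrt e}\Big)^2\exp\left(-\frac{\left(\sqrt{4-\frac2e}\left(y+\frac{1}{\alpha-1}\right)\right)^{\alpha/(\alpha-1)}}{A_\alpha^{1/(\alpha-1)}}\right).$$ *)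

theory Defs
  imports "HOL-Probability.Probability"
begin

end

theory Submission
  imports Defs "HOL-Complex_Analysis.Complex_Analysis"
begin

text \<open>
  Write \<open>\<psi>(s) = \<integral>\<^sub>0\<^sup>1 (exp (s x) - 1 - s x) x powr (- \<alpha> - 1) dx\<close>; this integral defines an
  entire function. The first step is the identity \<open>E exp (u X) = exp (\<psi>(u))\<close> for all real \<open>u\<close>.
  Damping by a Gaussian factor, \<open>s \<mapsto> E exp (s X - (d X)\<^sup>2 / 2)\<close> is entire, and so is the average
  of \<open>exp (\<psi>(s + i d U))\<close> over a standard Gaussian \<open>U\<close>; by Fubini and the hypothesis on the
  characteristic function the two agree on the imaginary axis, hence everywhere. Letting \<open>d \<rightarrow> 0\<close>
  gives the identity by monotone convergence.

  Since \<open>exp (-t) - 1 + t\<close> lies between \<open>min t\<^sup>2 t / e\<close> and \<open>min t\<^sup>2 t\<close>, one gets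
  \<open>\<psi>(-m) \<le> A m powr \<alpha> - m / (\<alpha> - 1) \<le> e \<psi>(-m)\<close> for \<open>m \<ge> 1\<close>, and
  \<open>\<psi>(-m) \<le> m\<^sup>2 / (2 (2 - \<alpha>))\<close> for all \<open>m \<ge> 0\<close>. The upper bound is then Chernoff's inequality
  \<open>P(X \<le> -y) \<le> exp (- l y + \<psi>(-l))\<close> at a suitable \<open>l\<close>, and the lower bound is the
  Paley--Zygmund inequality for \<open>Y = exp (- l X)\<close>, whose first two moments are \<open>exp (\<psi>(-l))\<close>
  and \<open>exp (\<psi>(-2l))\<close>.
\<close>

section \<open>Holomorphic parameter integrals\<close>

lemma holomorphic_lipschitz_near:
  fixes f :: "complex \<Rightarrow> complex"
  assumes holo: "f holomorphic_on UNIV"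
    and bound: "\<And>v. norm v \<le> norm s0 + 2 \<Longrightarrow> norm (f v) \<le> B"
    and s: "norm (s - s0) \<le> 1"
  shows "norm (f s - f s0) \<le> B * norm (s - s0)"
proof (rule field_differentiable_bound[where S="cball s0 1" and f'="deriv f"])
  show "(f has_field_derivative deriv f w) (at w within cball s0 1)" for w
    using holo by (meson UNIV_I holomorphic_derivI open_UNIV has_field_derivative_at_within)
  show "norm (deriv f w) \<le> B" if w: "w \<in> cball s0 1" for w
  proof -
    have "norm ((deriv ^^ 1) f w) \<le> fact 1 * B / 1 ^ 1"
    proof (rule Cauchy_inequality)
      show "f holomorphic_on ball w 1"
        using holo by (rule holomorphic_on_subset) auto
      show "continuous_on (cball w 1) f"
        using holo holomorphic_on_imp_continuous_on continuous_on_subset by blast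
      show "norm (f v) \<le> B" if "norm (w - v) = 1" for v
      proof (rule bound)
        have "norm v \<le> norm s0 + norm (w - s0) + norm (w - v)"
          using norm_triangle_ineq4[of "s0 + (w - s0)" "w - v"] norm_triangle_ineq[of s0 "w - s0"]
          by simp
        then show "norm v \<le> norm s0 + 2"
          using w that by (simp add: dist_norm norm_minus_commute)
      qed
    qed auto
    then show ?thesis by simp
  qed
qed (use s in \<open>auto simp: dist_norm norm_minus_commute\<close>)

lemma borel_measurable_deriv_parametric:
  fixes f :: "complex \<Rightarrow> 'a \<Rightarrow> complex"
  assumes meas: "\<And>s. f s \<in> borel_measurable N"
    and holo: "\<And>x. x \<in> space N \<Longrightarrow> (\<lambda>s. f s x) holomorphic_on UNIV"
  shows "(\<lambda>x. deriv (\<lambda>s. f s x) s0) \<in> borel_measurable N"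
proof (rule borel_measurable_LIMSEQ_metric)
  define h :: "nat \<Rightarrow> complex" where "h n = 1 / of_nat (Suc n)" for n
  show "(\<lambda>x. (f (s0 + h n) x - f s0 x) / h n) \<in> borel_measurable N" for n
    using meas by measurable
  show "(\<lambda>n. (f (s0 + h n) x - f s0 x) / h n) \<longlonglongrightarrow> deriv (\<lambda>s. f s x) s0"
    if "x \<in> space N" for x
  proof -
    have "((\<lambda>s. f s x) has_field_derivative deriv (\<lambda>s. f s x) s0) (at s0)"
      using holo[OF that] by (meson UNIV_I holomorphic_derivI open_UNIV)
    then have "((\<lambda>k. (f (s0 + k) x - f s0 x) / k) \<longlongrightarrow> deriv (\<lambda>s. f s x) s0) (at 0)"
      by (simp add: DERIV_def)
    moreover have "h \<longlonglongrightarrow> 0"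
      unfolding h_def using LIMSEQ_Suc[OF lim_1_over_n] by simp
    moreover have "h n \<noteq> 0" for n
      by (simp add: h_def del: of_nat_Suc)
    ultimately show ?thesis
      unfolding tendsto_at_iff_sequentially by (auto simp: o_def)
  qed
qed

lemma difference_quotient_integral_tendsto:
  fixes f :: "complex \<Rightarrow> 'a \<Rightarrow> complex"
  assumes meas: "\<And>s. f s \<in> borel_measurable N"
    and holo: "\<And>x. x \<in> space N \<Longrightarrow> (\<lambda>s. f s x) holomorphic_on UNIV"
    and G: "integrable N G" "\<And>x s. x \<in> space N \<Longrightarrow> norm s \<le> norm s0 + 2 \<Longrightarrow> norm (f s x) \<le> G x"
    and Y: "Y \<longlonglongrightarrow> s0" "\<And>n. Y n \<noteq> s0" "\<And>n. norm (Y n - s0) \<le> 1"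
  shows "(\<lambda>n. \<integral>x. (f (Y n) x - f s0 x) / (Y n - s0) \<partial>N) \<longlonglongrightarrow> (\<integral>x. deriv (\<lambda>s. f s x) s0 \<partial>N)"
proof (rule integral_dominated_convergence[where w=G])
  show "(\<lambda>x. (f (Y n) x - f s0 x) / (Y n - s0)) \<in> borel_measurable N" for n
    using meas by measurable
  show "(\<lambda>x. deriv (\<lambda>s. f s x) s0) \<in> borel_measurable N"
    using meas holo by (rule borel_measurable_deriv_parametric)
  show "AE x in N. (\<lambda>n. (f (Y n) x - f s0 x) / (Y n - s0)) \<longlonglongrightarrow> deriv (\<lambda>s. f s x) s0"
  proof (rule AE_I2)
    fix x assume "x \<in> space N"
    then have "((\<lambda>s. f s x) has_field_derivative deriv (\<lambda>s. f s x) s0) (at s0)"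
      using holo by (meson UNIV_I holomorphic_derivI open_UNIV)
    then have "((\<lambda>s. (f s x - f s0 x) / (s - s0)) \<longlongrightarrow> deriv (\<lambda>s. f s x) s0) (at s0)"
      by (simp add: has_field_derivative_iff)
    then show "(\<lambda>n. (f (Y n) x - f s0 x) / (Y n - s0)) \<longlonglongrightarrow> deriv (\<lambda>s. f s x) s0"
      unfolding tendsto_at_iff_sequentially using Y by (auto simp: o_def)
  qed
  show "AE x in N. norm ((f (Y n) x - f s0 x) / (Y n - s0)) \<le> G x" for n
  proof (rule AE_I2)
    fix x assume x: "x \<in> space N"
    have "norm (f (Y n) x - f s0 x) \<le> G x * norm (Y n - s0)"
      using holo[OF x] G(2)[OF x] Y(3) by (intro holomorphic_lipschitz_near)
    then show "norm ((f (Y n) x - f s0 x) / (Y n - s0)) \<le> G x"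
      using Y(2)[of n] by (simp add: norm_divide divide_le_eq)
  qed
qed (rule G)

lemma holomorphic_on_parametric_integral:
  fixes f :: "complex \<Rightarrow> 'a \<Rightarrow> complex"
  assumes meas: "\<And>s. f s \<in> borel_measurable N"
    and holo: "\<And>x. x \<in> space N \<Longrightarrow> (\<lambda>s. f s x) holomorphic_on UNIV"
    and dominated: "\<And>R. \<exists>G. integrable N G \<and> (\<forall>x\<in>space N. \<forall>s. norm s \<le> R \<longrightarrow> norm (f s x) \<le> G x)"
  shows "(\<lambda>s. \<integral>x. f s x \<partial>N) holomorphic_on UNIV"
proof -
  have intg: "integrable N (f s)" for s
  proof -
    obtain G where "integrable N G" "\<forall>x\<in>space N. \<forall>s'. norm s' \<le> norm s \<longrightarrow> norm (f s' x) \<le> G x"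
      using dominated[of "norm s"] by blast
    then show ?thesis
      by (intro Bochner_Integration.integrable_bound[OF _ meas])
         (auto intro!: AE_I2 order_trans[OF _ abs_ge_self])
  qed
  have "((\<lambda>s. \<integral>x. f s x \<partial>N) has_field_derivative (\<integral>x. deriv (\<lambda>s. f s x) s0 \<partial>N)) (at s0)" for s0
    unfolding has_field_derivative_iff tendsto_at_iff_sequentially
  proof (intro allI impI)
    obtain G where G: "integrable N G" "\<forall>x\<in>space N. \<forall>s. norm s \<le> norm s0 + 2 \<longrightarrow> norm (f s x) \<le> G x"
      using dominated[of "norm s0 + 2"] by blast
    fix X :: "nat \<Rightarrow> complex" assume X: "\<forall>i. X i \<in> UNIV - {s0}" "X \<longlonglongrightarrow> s0"
    obtain n0 where n0: "\<And>n. n \<ge> n0 \<Longrightarrow> dist (X n) s0 < 1"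
      using X(2) unfolding LIMSEQ_def by (meson zero_less_one)
    have "(\<lambda>n. \<integral>x. (f (X (n + n0)) x - f s0 x) / (X (n + n0) - s0) \<partial>N)
        \<longlonglongrightarrow> (\<integral>x. deriv (\<lambda>s. f s x) s0 \<partial>N)"
    proof (rule difference_quotient_integral_tendsto[OF meas holo G(1)])
      show "(\<lambda>n. X (n + n0)) \<longlonglongrightarrow> s0"
        using X(2) by (rule LIMSEQ_ignore_initial_segment)
      show "norm (X (n + n0) - s0) \<le> 1" for n
        using n0[of "n + n0"] by (simp add: dist_norm)
    qed (use G(2) X(1) in auto)
    then have "(\<lambda>n. ((\<integral>x. f (X (n + n0)) x \<partial>N) - (\<integral>x. f s0 x \<partial>N)) / (X (n + n0) - s0))
        \<longlonglongrightarrow> (\<integral>x. deriv (\<lambda>s. f s x) s0 \<partial>N)"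
      by (simp add: intg)
    then show "((\<lambda>s. ((\<integral>x. f s x \<partial>N) - (\<integral>x. f s0 x \<partial>N)) / (s - s0)) \<circ> X)
        \<longlonglongrightarrow> (\<integral>x. deriv (\<lambda>s. f s x) s0 \<partial>N)"
      unfolding o_def by (rule LIMSEQ_offset)
  qed
  then have "(\<lambda>s. \<integral>x. f s x \<partial>N) field_differentiable (at s0)" for s0
    unfolding field_differentiable_def by blast
  then show ?thesis
    unfolding holomorphic_on_def using field_differentiable_at_within by blast
qed

lemma norm_exp_minus_one_minus_le:
  fixes z :: complex
  shows "norm (exp z - 1 - z) \<le> norm z ^ 2 * exp (norm z)"
proof -
  have sums: "(\<lambda>k. z ^ (k + 2) /\<^sub>R fact (k + 2)) sums (exp z - (\<Sum>k<2. z ^ k /\<^sub>R fact k))"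
    by (intro sums_split_initial_segment exp_converges)
  have sumn: "summable (\<lambda>k. norm (z ^ (k + 2) /\<^sub>R fact (k + 2)))"
    using summable_ignore_initial_segment[OF summable_norm_exp[of z], of 2] by simp
  have eqn: "norm (z ^ (k + 2) /\<^sub>R fact (k + 2)) = norm z ^ 2 * (norm z ^ k / fact (k + 2))" for k
    unfolding norm_scaleR norm_power power_add by (simp add: norm_mult norm_power divide_inverse mult_ac)
  have "exp z - 1 - z = (\<Sum>k. z ^ (k + 2) /\<^sub>R fact (k + 2))"
    using sums by (simp add: sums_iff eval_nat_numeral)
  also have "norm \<dots> \<le> (\<Sum>k. norm (z ^ (k + 2) /\<^sub>R fact (k + 2)))"
    using sumn by (rule summable_norm)
  also have "\<dots> = (\<Sum>k. norm z ^ 2 * (norm z ^ k / fact (k + 2)))"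
    by (simp only: eqn)
  also have "\<dots> \<le> (\<Sum>k. norm z ^ 2 * (norm z ^ k / fact k))"
  proof (rule suminf_le)
    show "norm z ^ 2 * (norm z ^ k / fact (k + 2)) \<le> norm z ^ 2 * (norm z ^ k / fact k)" for k
      by (intro mult_left_mono divide_left_mono fact_mono) auto
    show "summable (\<lambda>k. norm z ^ 2 * (norm z ^ k / fact (k + 2)))"
      using sumn by (simp only: eqn)
    show "summable (\<lambda>k. norm z ^ 2 * (norm z ^ k / fact k))"
      using summable_exp[of "norm z"] by (intro summable_mult) (simp add: divide_inverse mult.commute)
  qed
  also have "\<dots> = norm z ^ 2 * exp (norm z)"
  proof -
    have "(\<lambda>k. norm z ^ k / fact k) sums exp (norm z)"
      using exp_converges[of "norm z"] by (simp add: divide_inverse mult.commute)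
    then show ?thesis
      using sums_unique[OF sums_mult[of _ _ "norm z ^ 2"]] by simp
  qed
  finally show ?thesis .
qed

lemma exp_neg_sub_one_add_le:
  fixes y :: real
  assumes "0 \<le> y"
  shows "exp (-y) - 1 + y \<le> y\<^sup>2 / 2"
proof -
  define f where "f t = 1 - t + t\<^sup>2 / 2 - exp (-t)" for t :: real
  have "f 0 \<le> f y"
  proof (rule DERIV_nonneg_imp_increasing_open[OF assms])
    fix x :: real
    have "(f has_real_derivative (-1 + x + exp (-x))) (at x)"
      unfolding f_def by (auto intro!: derivative_eq_intros simp: power2_eq_square)
    moreover have "0 \<le> -1 + x + exp (-x)"
      using exp_ge_add_one_self[of "-x"] by simp
    ultimately show "\<exists>d. (f has_real_derivative d) (at x) \<and> 0 \<le> d" by blast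
  qed (auto simp: f_def intro!: continuous_intros)
  then show ?thesis by (simp add: f_def)
qed

lemma div_exp1_le_exp_neg_sub_one_add:
  fixes y :: real
  assumes y: "1 \<le> y"
  shows "y / exp 1 \<le> exp (-y) - 1 + y"
proof -
  define f where "f t = exp (-t) - 1 + t - t / exp 1" for t :: real
  have "f 1 \<le> f y"
  proof (rule DERIV_nonneg_imp_increasing_open[OF y])
    fix x :: real assume x: "1 < x" "x < y"
    have "(f has_real_derivative (1 - exp (-x) - 1 / exp 1)) (at x)"
      unfolding f_def by (auto intro!: derivative_eq_intros)
    moreover have "0 \<le> 1 - exp (-x) - 1 / exp 1"
    proof -
      have "exp (-x) \<le> exp (-1)"
        using x by simp
      then have "exp (-x) \<le> 1 / exp 1"
        by (simp add: exp_minus inverse_eq_divide)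
      moreover have "1 / exp 1 \<le> (1/2 :: real)"
        using exp_ge_add_one_self[of "1::real"] by (simp add: divide_le_eq)
      ultimately show ?thesis by linarith
    qed
    ultimately show "\<exists>d. (f has_real_derivative d) (at x) \<and> 0 \<le> d" by blast
  qed (auto simp: f_def intro!: continuous_intros)
  then show ?thesis by (simp add: f_def exp_minus inverse_eq_divide)
qed

lemma two_sub_le_two_add_mult_exp_neg:
  fixes t :: real
  assumes "0 \<le> t"
  shows "2 - t \<le> (2 + t) * exp (-t)"
proof -
  define k where "k s = (2 + s) * exp (-s) - (2 - s)" for s :: real
  have "k 0 \<le> k t"
  proof (rule DERIV_nonneg_imp_increasing_open[OF assms])
    fix x :: real
    have "(k has_real_derivative (1 - (1 + x) * exp (-x))) (at x)"
      unfolding k_def by (auto intro!: derivative_eq_intros simp: algebra_simps)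
    moreover have "(1 + x) * exp (-x) \<le> exp x * exp (-x)"
      using exp_ge_add_one_self[of x] by (intro mult_right_mono) auto
    ultimately show "\<exists>d. (k has_real_derivative d) (at x) \<and> 0 \<le> d"
      by (auto simp: exp_minus)
  qed (auto simp: k_def intro!: continuous_intros)
  then show ?thesis by (simp add: k_def)
qed

lemma sq_div_exp1_le_exp_neg_sub_one_add:
  fixes y :: real
  assumes y: "0 \<le> y" "y \<le> 1"
  shows "y\<^sup>2 / exp 1 \<le> exp (-y) - 1 + y"
proof (cases "y = 0")
  case False
  with y have y0: "0 < y" by simp
  \<comment> \<open>\<open>(exp (-t) - 1 + t) / t\<^sup>2\<close> decreases on \<open>]0, 1]\<close>\<close>
  define g where "g t = (exp (-t) - 1 + t) / t\<^sup>2" for t :: real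
  have "g 1 \<le> g y"
  proof (rule DERIV_nonpos_imp_decreasing_open[OF y(2)])
    fix x :: real assume x: "y < x" "x < 1"
    with y0 have x0: "0 < x" by simp
    have "(g has_real_derivative (x * ((2 - x) - (2 + x) * exp (-x)) / (x\<^sup>2)\<^sup>2)) (at x)"
      unfolding g_def using x0
      by (auto intro!: derivative_eq_intros simp: power2_eq_square algebra_simps)
    moreover have "x * ((2 - x) - (2 + x) * exp (-x)) / (x\<^sup>2)\<^sup>2 \<le> 0"
      using two_sub_le_two_add_mult_exp_neg[of x] x0
      by (intro divide_nonpos_pos mult_nonneg_nonpos) auto
    ultimately show "\<exists>d. (g has_real_derivative d) (at x) \<and> d \<le> 0" by blast
  qed (use y0 in \<open>auto simp: g_def intro!: continuous_intros\<close>)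
  then have "1 / exp 1 \<le> (exp (-y) - 1 + y) / y\<^sup>2"
    by (simp add: g_def exp_minus inverse_eq_divide)
  then show ?thesis
    using y0 by (simp add: field_simps)
qed simp

lemma power2_div_powr_add_one:
  fixes x a :: real
  assumes "0 < x"
  shows "x\<^sup>2 / x powr (a + 1) = x powr (1 - a)"
  using assms powr_diff[of x 2 "a + 1"] by (simp add: powr_numeral)

lemma div_powr_add_one:
  fixes x a :: real
  assumes "0 < x"
  shows "x / x powr (a + 1) = x powr (- a)"
  using assms powr_diff[of x 1 "a + 1"] by simp

lemma has_integral_Ioc_if_Icc:
  fixes f :: "real \<Rightarrow> real"
  assumes "(f has_integral I) {a..b}"
  shows "(f has_integral I) {a<..b}"
proof -
  have "(f has_integral I) {a..b} \<longleftrightarrow> (f has_integral I) {a<..b}"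
    by (rule has_integral_spike_set_eq) (auto intro: negligible_subset[OF negligible_sing[of a]])
  with assms show ?thesis by simp
qed

lemma powr_mult_inverse_powr_diff:
  fixes m a b :: real
  assumes "0 < m"
  shows "m powr b * (1 / m) powr (b - a) = m powr a"
  using assms by (simp add: powr_divide powr_diff[symmetric])

lemma mult_sub_half_square_le:
  fixes d u x :: real
  assumes "0 < d"
  shows "u * x - (d * x)\<^sup>2 / 2 \<le> u\<^sup>2 / (2 * d\<^sup>2)"
proof -
  have "0 \<le> (d * x - u / d)\<^sup>2 / 2"
    by simp
  also have "(d * x - u / d)\<^sup>2 / 2 = (d * x)\<^sup>2 / 2 - u * x + u\<^sup>2 / (2 * d\<^sup>2)"
    using assms by (simp add: power2_eq_square field_simps)
  finally show ?thesis
    by simp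
qed

lemma has_integral_powr_Icc:
  fixes r a b :: real
  assumes a: "0 < a" "a \<le> b" and r: "r \<noteq> -1"
  shows "((\<lambda>x. x powr r) has_integral (b powr (r + 1) / (r + 1) - a powr (r + 1) / (r + 1))) {a..b}"
proof (rule fundamental_theorem_of_calculus[OF a(2)])
  fix x assume "x \<in> {a..b}"
  then have x: "0 < x"
    using a by simp
  have "((\<lambda>x. x powr (r + 1) / (r + 1)) has_real_derivative ((r + 1) * x powr (r + 1 - 1) / (r + 1))) (at x)"
    by (intro DERIV_cdivide has_real_derivative_powr x)
  then show "((\<lambda>x. x powr (r + 1) / (r + 1)) has_vector_derivative x powr r) (at x within {a..b})"
    using r by (simp add: has_real_derivative_iff_has_vector_derivative[symmetric] has_field_derivative_at_within)
qed

lemma one_sub_powr_mult_one_add_le: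
  fixes p s :: real
  assumes p: "0 \<le> p" and s: "0 \<le> s" "s < 1"
  shows "(1 - s) powr p * (1 + p * s) \<le> 1"
proof -
  have "p * ln (1 - s) \<le> p * (- s)"
    using ln_le_minus_one[of "1 - s"] s p by (intro mult_left_mono) auto
  then have "(1 - s) powr p \<le> exp (- (p * s))"
    using s by (simp add: powr_def)
  moreover have "1 + p * s \<le> exp (p * s)"
    by (rule exp_ge_add_one_self)
  ultimately have "(1 - s) powr p * (1 + p * s) \<le> exp (- (p * s)) * exp (p * s)"
    using p s by (intro mult_mono) auto
  then show ?thesis
    by (simp add: exp_minus)
qed

lemma le_two_mult_one_add_mult:
  fixes p q y :: real
  assumes p: "1 < p" and q: "1 < q" and yq: "2 * q \<le> y" and small: "y \<le> 2 * q + p"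
  shows "y + p \<le> 2 * y * (1 + p * (1 - (y + p) / (2 * (q + p))))"
proof -
  define A w where "A = q + p" and "w = 2 * q + p - y"
  have A: "0 < A" and w: "0 \<le> w" "w \<le> p"
    using p q small yq by (auto simp: A_def w_def)
  have "2 * q * A + (p - 1) * w * A + p * w * q - p * w\<^sup>2
      = 2 * q * A + w * (p * (q - 1) + q * (p - 1)) + p * w * (p - w)"
    by (simp add: A_def power2_eq_square algebra_simps)
  moreover have "0 \<le> 2 * q * A" "0 \<le> w * (p * (q - 1) + q * (p - 1))" "0 \<le> p * w * (p - w)"
    using w p q A by simp_all
  ultimately have "0 \<le> 2 * q * A + (p - 1) * w * A + p * w * q - p * w\<^sup>2"
    by linarith
  then have "0 \<le> (2 * q * A + (p - 1) * w * A + p * w * q - p * w\<^sup>2) / A"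
    using A by (rule divide_nonneg_pos)
  also have "\<dots> = 2 * y * (1 + p * (1 - (y + p) / (2 * (q + p)))) - (y + p)"
    using A by (simp add: w_def A_def power2_eq_square field_simps)
  finally show ?thesis
    by simp
qed

lemma half_mult_powr_le:
  fixes p q y :: real
  assumes p: "1 < p" and q: "1 < q" and yq: "2 * q \<le> y" and small: "y + p < 2 * (q + p)"
  shows "(y + p) / 2 * ((y + p) / (2 * (q + p))) powr p \<le> y"
proof -
  define s where "s = 1 - (y + p) / (2 * (q + p))"
  have s: "0 < s" "s < 1" and yp: "0 < y + p"
    using small p q yq by (auto simp: s_def field_simps)
  have "(y + p) / 2 * ((y + p) / (2 * (q + p))) powr p * (1 + p * s) \<le> (y + p) / 2"
    using mult_left_mono[OF one_sub_powr_mult_one_add_le[of p s], of "(y + p) / 2"] p s yp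
    by (simp add: s_def mult.assoc)
  also have "\<dots> \<le> y * (1 + p * s)"
  proof -
    have "y + p \<le> 2 * y * (1 + p * s)"
      unfolding s_def using small by (intro le_two_mult_one_add_mult[OF p q yq]) simp
    then show ?thesis
      by (simp add: field_simps)
  qed
  finally show ?thesis
    using p s by (simp add: add_pos_nonneg)
qed

lemma sqrt_mult_powr_eq:
  fixes D z A p :: real
  assumes D: "0 < D" and z: "0 < z" and A: "0 < A" and p: "0 < p"
  defines "c \<equiv> D powr ((p - 1) / (2 * (p + 1)))"
  shows "D * (c * z * (c * z / A) powr p) = (sqrt D * z) powr (p + 1) / A powr p"
proof -
  have c: "0 < c"
    using D by (simp add: c_def)
  have "c * c powr p = c powr (p + 1)"
    using c by (simp add: powr_add)
  also have "\<dots> = D powr ((p - 1) / (2 * (p + 1)) * (p + 1))"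
    by (simp add: c_def powr_powr)
  also have "(p - 1) / (2 * (p + 1)) * (p + 1) = (p - 1) / 2"
    using p by (simp add: field_simps)
  finally have "D * (c * c powr p) = D powr (1 + (p - 1) / 2)"
    using D by (simp add: powr_add)
  also have "\<dots> = sqrt D powr (p + 1)"
    using D by (simp add: powr_half_sqrt[symmetric] powr_powr field_simps)
  finally have cc: "D * (c * c powr p) = sqrt D powr (p + 1)" .
  have "D * (c * z * (c * z / A) powr p) = D * (c * c powr p) * (z * z powr p) / A powr p"
    using c z A by (simp add: powr_divide powr_mult field_simps)
  also have "\<dots> = (sqrt D * z) powr (p + 1) / A powr p"
    using z D by (simp add: cc powr_mult powr_add)
  finally show ?thesis .
qed

section \<open>The Paley--Zygmund inequality\<close>

lemma le_half_tangent_bound: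
  fixes c t y :: real
  assumes c: "0 \<le> c" and t: "0 < t"
  shows "y \<le> c + (t * y\<^sup>2 + (if c < y then 1 else 0) / t) / 2"
proof (cases "c < y")
  case True
  have "2 * t * y \<le> t\<^sup>2 * y\<^sup>2 + 1"
    using zero_le_power2[of "t * y - 1"] by (simp add: power2_eq_square algebra_simps)
  then have "y \<le> (t * y\<^sup>2 + 1 / t) / 2"
    using t by (simp add: field_simps power2_eq_square)
  with True c show ?thesis
    by (simp add: field_simps)
next
  case False
  moreover have "0 \<le> (t * y\<^sup>2 + 0 / t) / 2"
    using t by simp
  ultimately show ?thesis
    by simp
qed

lemma (in prob_space) integral_le_tangent_bound:
  fixes Y :: "'a \<Rightarrow> real"
  assumes Ym: "Y \<in> borel_measurable M" and iY2: "integrable M (\<lambda>\<omega>. (Y \<omega>)\<^sup>2)"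
    and c: "0 \<le> c" and t: "0 < t"
  shows "(\<integral>\<omega>. Y \<omega> \<partial>M) \<le> c + (t * (\<integral>\<omega>. (Y \<omega>)\<^sup>2 \<partial>M) + prob {\<omega> \<in> space M. c < Y \<omega>} / t) / 2"
proof -
  define B where "B = {\<omega> \<in> space M. c < Y \<omega>}"
  have B: "B \<in> events"
    unfolding B_def using Ym by measurable
  have iB: "integrable M (indicator B :: 'a \<Rightarrow> real)"
    using B by (intro integrable_real_indicator) (auto simp: emeasure_eq_measure)
  have "(\<integral>\<omega>. Y \<omega> \<partial>M) \<le> (\<integral>\<omega>. c + (t * (Y \<omega>)\<^sup>2 + indicator B \<omega> / t) / 2 \<partial>M)"
  proof (rule integral_mono_AE')
    show "integrable M (\<lambda>\<omega>. c + (t * (Y \<omega>)\<^sup>2 + indicator B \<omega> / t) / 2)"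
      using iY2 iB by auto
    show "AE \<omega> in M. Y \<omega> \<le> c + (t * (Y \<omega>)\<^sup>2 + indicator B \<omega> / t) / 2"
    proof (rule AE_I2)
      fix \<omega> assume "\<omega> \<in> space M"
      then show "Y \<omega> \<le> c + (t * (Y \<omega>)\<^sup>2 + indicator B \<omega> / t) / 2"
        using le_half_tangent_bound[OF c t, of "Y \<omega>"] by (simp add: B_def indicator_def split: if_splits)
    qed
    show "AE \<omega> in M. 0 \<le> c + (t * (Y \<omega>)\<^sup>2 + indicator B \<omega> / t) / 2"
      using c t by (intro AE_I2 add_nonneg_nonneg) auto
  qed
  also have "\<dots> = c + (t * (\<integral>\<omega>. (Y \<omega>)\<^sup>2 \<partial>M) + prob B / t) / 2"
    using iY2 iB B by (simp add: prob_space)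
  finally show ?thesis by (simp add: B_def)
qed

theorem (in prob_space) paley_zygmund:
  fixes Y :: "'a \<Rightarrow> real"
  assumes Ym: "Y \<in> borel_measurable M" and iY2: "integrable M (\<lambda>\<omega>. (Y \<omega>)\<^sup>2)"
    and \<theta>: "0 \<le> \<theta>" "\<theta> < 1" and m0: "0 < (\<integral>\<omega>. Y \<omega> \<partial>M)"
  shows "(1 - \<theta>)\<^sup>2 * (\<integral>\<omega>. Y \<omega> \<partial>M)\<^sup>2 / (\<integral>\<omega>. (Y \<omega>)\<^sup>2 \<partial>M)
           \<le> prob {\<omega> \<in> space M. \<theta> * (\<integral>\<omega>. Y \<omega> \<partial>M) < Y \<omega>}"
proof -
  define m where "m = (\<integral>\<omega>. Y \<omega> \<partial>M)"
  define v where "v = (\<integral>\<omega>. (Y \<omega>)\<^sup>2 \<partial>M)"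
  define P where "P = prob {\<omega> \<in> space M. \<theta> * m < Y \<omega>}"
  show ?thesis
  proof (cases "v = 0")
    case False
    then have v: "0 < v"
      unfolding v_def by (metis integral_nonneg_AE AE_I2 zero_le_power2 order_neq_le_trans)
    define u where "u = (1 - \<theta>) * m"
    have u: "0 < u"
      using \<theta> m0 by (simp add: u_def m_def)
    \<comment> \<open>the optimal choice \<open>t = u / v\<close>\<close>
    have tangent: "m \<le> \<theta> * m + ((u / v) * v + P / (u / v)) / 2"
      unfolding m_def v_def P_def using m0 \<theta> u v
      by (intro integral_le_tangent_bound Ym iY2) (auto simp: m_def v_def)
    have "(u / v) * v = u" "P / (u / v) = P * v / u"
      using v by simp_all
    with tangent have "m \<le> \<theta> * m + (u + P * v / u) / 2"
      by (simp only:)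
    moreover have "m - \<theta> * m = u"
      by (simp add: u_def algebra_simps)
    ultimately have "u \<le> P * v / u"
      by (simp add: field_simps)
    then have "u * u \<le> P * v"
      using u by (simp add: field_simps)
    then show ?thesis
      using v by (simp add: u_def m_def v_def P_def field_simps power2_eq_square)
  qed (simp add: v_def)
qed

section \<open>The cumulant function of the truncated stable law\<close>

lemma set_integrable_powr_Ioc:
  fixes e :: real
  assumes "-1 < e"
  shows "set_integrable lborel {0<..1} (\<lambda>x. x powr e)"
proof -
  have "(\<lambda>x. x powr e) integrable_on {0<..1::real}"
    by (rule integrable_on_powr_from_0') (use assms in auto)
  then have "(\<lambda>x. x powr e) absolutely_integrable_on {0<..1::real}"
    by (subst absolutely_integrable_on_iff_nonneg) auto
  then show ?thesis
    unfolding set_integrable_def by (subst (asm) integrable_completion) auto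
qed

locale truncated_stable =
  fixes \<alpha> :: real
  assumes alpha_gt_1: "1 < \<alpha>" and alpha_lt_2: "\<alpha> < 2"
begin

definition levy_kernel :: "complex \<Rightarrow> real \<Rightarrow> complex" where
  "levy_kernel s x = (exp (s * of_real x) - 1 - s * of_real x) / of_real (x powr (\<alpha> + 1))"

definition levy_kernel_real :: "real \<Rightarrow> real \<Rightarrow> real" where
  "levy_kernel_real u x = (exp (u * x) - 1 - u * x) / x powr (\<alpha> + 1)"

definition cgf :: "complex \<Rightarrow> complex" where
  "cgf s = (CLBINT x:{0<..1}. levy_kernel s x)"

definition cgf_real :: "real \<Rightarrow> real" where
  "cgf_real u = (LBINT x:{0<..1}. levy_kernel_real u x)"

definition A\<^sub>\<alpha> :: real where
  "A\<^sub>\<alpha> = 1 / (2 - \<alpha>) + 1 / (\<alpha> - 1)"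

lemma norm_levy_kernel_le:
  assumes x: "x \<in> {0<..1}" and s: "norm s \<le> R"
  shows "norm (levy_kernel s x) \<le> R\<^sup>2 * exp R * x powr (1 - \<alpha>)"
proof -
  have x0: "0 < x" "x \<le> 1"
    using x by auto
  have sx: "norm (s * of_real x) \<le> R * x"
    using s x0 by (simp add: norm_mult mult_right_mono)
  have "norm (s * of_real x) \<le> R"
    using sx s x0 by (smt (verit) mult_left_le norm_ge_zero)
  then have "norm (exp (s * of_real x) - 1 - s * of_real x) \<le> (R * x)\<^sup>2 * exp R"
    using norm_exp_minus_one_minus_le[of "s * of_real x"] sx
    by (smt (verit) exp_le_cancel_iff mult_mono norm_ge_zero power_mono zero_le_power2 exp_ge_zero)
  then have "norm (levy_kernel s x) \<le> (R * x)\<^sup>2 * exp R / x powr (\<alpha> + 1)"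
    using x0 by (simp add: levy_kernel_def norm_divide divide_right_mono)
  also have "\<dots> = R\<^sup>2 * exp R * (x\<^sup>2 / x powr (\<alpha> + 1))"
    by (simp add: power_mult_distrib)
  also have "\<dots> = R\<^sup>2 * exp R * x powr (1 - \<alpha>)"
    using x0 by (simp add: power2_div_powr_add_one)
  finally show ?thesis .
qed

lemma levy_kernel_dominated:
  "\<exists>G. integrable lborel G \<and> (\<forall>x\<in>space lborel. \<forall>s. norm s \<le> R \<longrightarrow>
      norm (indicator {0<..1} x *\<^sub>R levy_kernel s x) \<le> G x)"
proof (intro exI conjI ballI allI impI)
  show "integrable lborel (\<lambda>x. R\<^sup>2 * exp R * (indicator {0<..1} x * x powr (1 - \<alpha>)))"
    using set_integrable_powr_Ioc[of "1 - \<alpha>"] alpha_lt_2 by (simp add: set_integrable_def)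
  show "norm (indicator {0<..1} x *\<^sub>R levy_kernel s x) \<le> R\<^sup>2 * exp R * (indicator {0<..1} x * x powr (1 - \<alpha>))"
    if "norm s \<le> R" for x s
    using norm_levy_kernel_le[OF _ that, of x] by (cases "x \<in> {0<..1}") auto
qed

lemma borel_measurable_levy_kernel [measurable]:
  "(\<lambda>x. indicator {0<..1} x *\<^sub>R levy_kernel s x) \<in> borel_measurable lborel"
  unfolding levy_kernel_def by measurable

lemma holomorphic_levy_kernel: "(\<lambda>s. levy_kernel s x) holomorphic_on UNIV"
  unfolding levy_kernel_def
  by (cases "x powr (\<alpha> + 1) = 0") (simp_all add: holomorphic_intros)

lemma set_integrable_levy_kernel: "set_integrable lborel {0<..1} (levy_kernel s)"
proof -
  obtain G where G: "integrable lborel G"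
    "\<forall>x. \<forall>s'. norm s' \<le> norm s \<longrightarrow> norm (indicator {0<..1} x *\<^sub>R levy_kernel s' x) \<le> G x"
    using levy_kernel_dominated[of "norm s"] by auto
  show ?thesis
    unfolding set_integrable_def
    by (rule Bochner_Integration.integrable_bound[OF G(1) borel_measurable_levy_kernel])
       (use G(2) in \<open>auto intro!: AE_I2 order_trans[OF _ abs_ge_self]\<close>)
qed

lemma cgf_holomorphic: "cgf holomorphic_on UNIV"
  unfolding cgf_def set_lebesgue_integral_def
proof (rule holomorphic_on_parametric_integral)
  show "(\<lambda>s. indicator {0<..1} x *\<^sub>R levy_kernel s x) holomorphic_on UNIV" for x
    using holomorphic_levy_kernel[of x] by (cases "x \<in> {0<..1}") simp_all
qed (simp_all only: levy_kernel_dominated borel_measurable_levy_kernel)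

lemma levy_kernel_of_real: "levy_kernel (of_real u) x = of_real (levy_kernel_real u x)"
proof -
  have "exp (of_real u * of_real x) = (of_real (exp (u * x)) :: complex)"
    by (metis exp_of_real of_real_mult)
  then show ?thesis
    by (simp add: levy_kernel_def levy_kernel_real_def)
qed

lemma set_integrable_Re_levy_kernel: "set_integrable lborel {0<..1} (\<lambda>x. Re (levy_kernel s x))"
  using integrable_Re[OF set_integrable_levy_kernel[of s, unfolded set_integrable_def]]
  by (simp add: set_integrable_def)

lemma set_integrable_levy_kernel_real: "set_integrable lborel {0<..1} (levy_kernel_real u)"
  using set_integrable_Re_levy_kernel[of "of_real u"] by (simp add: levy_kernel_of_real)

lemma cgf_of_real: "cgf (of_real u) = of_real (cgf_real u)"
  unfolding cgf_def cgf_real_def levy_kernel_of_real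
  by (rule set_integral_complex_of_real)

lemma Re_cgf_le: "Re (cgf s) \<le> cgf_real (Re s)"
proof -
  have "Re (cgf s) = (LBINT x:{0<..1}. Re (levy_kernel s x))"
    using integral_Re[OF set_integrable_levy_kernel[of s, unfolded set_integrable_def]]
    by (simp add: cgf_def set_lebesgue_integral_def)
  also have "\<dots> \<le> cgf_real (Re s)"
    unfolding cgf_real_def
  proof (rule set_integral_mono)
    show "set_integrable lborel {0<..1} (\<lambda>x. Re (levy_kernel s x))"
      by (rule set_integrable_Re_levy_kernel)
    show "Re (levy_kernel s x) \<le> levy_kernel_real (Re s) x" if "x \<in> {0<..1}" for x
    proof -
      have "Re (exp (s * of_real x)) \<le> exp (Re s * x)"
        by (simp add: Re_exp mult.commute)
      then show ?thesis
        using that by (simp add: levy_kernel_def levy_kernel_real_def divide_right_mono)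
    qed
  qed (rule set_integrable_levy_kernel_real)
  finally show ?thesis .
qed

lemma norm_exp_cgf_le: "norm (exp (cgf s)) \<le> exp (cgf_real (Re s))"
  using Re_cgf_le[of s] by simp

lemma cgf_real_bounded: "\<exists>C. \<forall>u. \<bar>u\<bar> \<le> R \<longrightarrow> cgf_real u \<le> C"
proof -
  obtain G where G: "integrable lborel G"
    "\<forall>x. \<forall>s. norm s \<le> R \<longrightarrow> norm (indicator {0<..1} x *\<^sub>R levy_kernel s x) \<le> G x"
    using levy_kernel_dominated[of R] by auto
  have "cgf_real u \<le> integral\<^sup>L lborel G" if "\<bar>u\<bar> \<le> R" for u
  proof -
    have "cgf_real u \<le> norm (cgf (of_real u))"
      by (simp add: cgf_of_real)
    also have "\<dots> \<le> integral\<^sup>L lborel G"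
      unfolding cgf_def set_lebesgue_integral_def
      using set_integrable_levy_kernel[of "of_real u"] G that
      by (intro Bochner_Integration.integral_norm_bound_integral) (auto simp: set_integrable_def)
    finally show ?thesis .
  qed
  then show ?thesis by blast
qed

lemma cgf_real_eq_integral:
  shows "levy_kernel_real u integrable_on {0<..1}"
    and "cgf_real u = integral {0<..1} (levy_kernel_real u)"
  using set_borel_integral_eq_integral[OF set_integrable_levy_kernel_real]
  by (simp_all add: cgf_real_def)

lemma levy_kernel_real_neg:
  "levy_kernel_real (-m) x = (exp (- (m * x)) - 1 + m * x) / x powr (\<alpha> + 1)"
  by (simp add: levy_kernel_real_def)

lemma cgf_real_neg_le_quadratic:
  assumes m: "0 \<le> m"
  shows "cgf_real (-m) \<le> m\<^sup>2 / (2 * (2 - \<alpha>))"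
proof -
  have "((\<lambda>x. x powr (1 - \<alpha>)) has_integral (1 powr ((1 - \<alpha>) + 1) / ((1 - \<alpha>) + 1))) {0..1}"
    by (rule has_integral_powr_from_0) (use alpha_lt_2 in auto)
  then have "((\<lambda>x. x powr (1 - \<alpha>)) has_integral (1 / (2 - \<alpha>))) {0..1}"
    by simp
  then have I: "((\<lambda>x. m\<^sup>2 / 2 * x powr (1 - \<alpha>)) has_integral (m\<^sup>2 / 2 * (1 / (2 - \<alpha>)))) {0<..1}"
    by (intro has_integral_Ioc_if_Icc has_integral_mult_right)
  have "cgf_real (-m) \<le> integral {0<..1} (\<lambda>x. m\<^sup>2 / 2 * x powr (1 - \<alpha>))"
    unfolding cgf_real_eq_integral(2)
  proof (rule integral_le)
    show "levy_kernel_real (-m) x \<le> m\<^sup>2 / 2 * x powr (1 - \<alpha>)" if "x \<in> {0<..1}" for x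
    proof -
      have x0: "0 < x" using that by simp
      have "levy_kernel_real (-m) x \<le> ((m * x)\<^sup>2 / 2) / x powr (\<alpha> + 1)"
        unfolding levy_kernel_real_neg
        using exp_neg_sub_one_add_le[of "m * x"] m x0 by (intro divide_right_mono) auto
      also have "\<dots> = m\<^sup>2 / 2 * (x\<^sup>2 / x powr (\<alpha> + 1))"
        by (simp add: power_mult_distrib)
      finally show ?thesis
        using x0 by (simp add: power2_div_powr_add_one)
    qed
  qed (use I cgf_real_eq_integral(1) in blast)+
  also have "\<dots> = m\<^sup>2 / 2 * (1 / (2 - \<alpha>))"
    by (rule integral_unique[OF I])
  also have "\<dots> = m\<^sup>2 / (2 * (2 - \<alpha>))"
    by simp
  finally show ?thesis .
qed

text \<open>Modelled on \<open>exp (-t) - 1 + t \<approx> min t\<^sup>2 t\<close>: \<open>levy_majorant m x = min ((m x)\<^sup>2) (m x) / x powr (\<alpha> + 1)\<close>.\<close>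

definition levy_majorant :: "real \<Rightarrow> real \<Rightarrow> real" where
  "levy_majorant m x = (if x \<le> 1 / m then m\<^sup>2 * x powr (1 - \<alpha>) else m * x powr (- \<alpha>))"

lemma has_integral_levy_majorant:
  assumes m: "1 \<le> m"
  shows "(levy_majorant m has_integral (A\<^sub>\<alpha> * m powr \<alpha> - m / (\<alpha> - 1))) {0<..1}"
proof (rule has_integral_Ioc_if_Icc)
  define c where "c = 1 / m"
  have m0: "0 < m" and c: "0 < c" "c \<le> 1"
    using m by (auto simp: c_def)
  have "((\<lambda>x. x powr (1 - \<alpha>)) has_integral (c powr ((1 - \<alpha>) + 1) / ((1 - \<alpha>) + 1))) {0..c}"
    by (rule has_integral_powr_from_0) (use alpha_lt_2 c in auto)
  then have "((\<lambda>x. m\<^sup>2 * x powr (1 - \<alpha>)) has_integral (m\<^sup>2 * (c powr (2 - \<alpha>) / (2 - \<alpha>)))) {0..c}"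
    by (intro has_integral_mult_right) simp
  moreover have "m\<^sup>2 * c powr (2 - \<alpha>) = m powr \<alpha>"
    using powr_mult_inverse_powr_diff[OF m0, of 2 \<alpha>] m0 by (simp add: c_def powr_numeral)
  ultimately have "((\<lambda>x. m\<^sup>2 * x powr (1 - \<alpha>)) has_integral (m powr \<alpha> / (2 - \<alpha>))) {0..c}"
    by (simp only: times_divide_eq_right)
  then have I1: "(levy_majorant m has_integral (m powr \<alpha> / (2 - \<alpha>))) {0..c}"
    by (rule has_integral_eq[rotated]) (simp add: levy_majorant_def c_def)
  have "((\<lambda>x. x powr (- \<alpha>)) has_integral (1 / (1 - \<alpha>) - c powr (1 - \<alpha>) / (1 - \<alpha>))) {c..1}"
    using has_integral_powr_Icc[OF c, of "- \<alpha>"] alpha_gt_1 by simp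
  then have "((\<lambda>x. m * x powr (- \<alpha>)) has_integral (m * (1 / (1 - \<alpha>) - c powr (1 - \<alpha>) / (1 - \<alpha>)))) {c..1}"
    by (rule has_integral_mult_right)
  moreover have "m * (1 / (1 - \<alpha>) - c powr (1 - \<alpha>) / (1 - \<alpha>)) = (m powr \<alpha> - m) / (\<alpha> - 1)"
  proof -
    have "m * c powr (1 - \<alpha>) = m powr \<alpha>"
      using powr_mult_inverse_powr_diff[OF m0, of 1 \<alpha>] m0 by (simp add: c_def)
    then show ?thesis
      using alpha_gt_1 by (simp add: field_simps)
  qed
  ultimately have "((\<lambda>x. m * x powr (- \<alpha>)) has_integral ((m powr \<alpha> - m) / (\<alpha> - 1))) {c..1}"
    by simp
  then have I2: "(levy_majorant m has_integral ((m powr \<alpha> - m) / (\<alpha> - 1))) {c..1}"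
    by (rule has_integral_spike[OF negligible_sing[of c], rotated]) (simp add: levy_majorant_def c_def)
  have "(levy_majorant m has_integral (m powr \<alpha> / (2 - \<alpha>) + (m powr \<alpha> - m) / (\<alpha> - 1))) {0..1}"
    by (rule has_integral_combine[OF _ _ I1 I2]) (use c in auto)
  then show "(levy_majorant m has_integral (A\<^sub>\<alpha> * m powr \<alpha> - m / (\<alpha> - 1))) {0..1}"
    by (simp add: A\<^sub>\<alpha>_def diff_divide_distrib distrib_right add_diff_eq)
qed

lemma levy_kernel_real_le_majorant:
  assumes m: "1 \<le> m" and x: "x \<in> {0<..1}"
  shows "levy_kernel_real (-m) x \<le> levy_majorant m x"
proof -
  have x0: "0 < x" and p: "0 < x powr (\<alpha> + 1)"
    using x by auto
  show ?thesis
  proof (cases "x \<le> 1 / m")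
    case True
    have "exp (- (m * x)) - 1 + m * x \<le> (m * x)\<^sup>2 / 2"
      using exp_neg_sub_one_add_le[of "m * x"] m x0 by simp
    moreover have "(m * x)\<^sup>2 / 2 \<le> (m * x)\<^sup>2"
      by simp
    ultimately have "exp (- (m * x)) - 1 + m * x \<le> (m * x)\<^sup>2"
      by linarith
    then have "levy_kernel_real (-m) x \<le> (m * x)\<^sup>2 / x powr (\<alpha> + 1)"
      unfolding levy_kernel_real_neg using p by (intro divide_right_mono) auto
    also have "\<dots> = m\<^sup>2 * (x\<^sup>2 / x powr (\<alpha> + 1))"
      by (simp add: power_mult_distrib)
    also have "\<dots> = levy_majorant m x"
      using True x0 by (simp add: levy_majorant_def power2_div_powr_add_one)
    finally show ?thesis .
  next
    case False
    have "levy_kernel_real (-m) x \<le> (m * x) / x powr (\<alpha> + 1)"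
      unfolding levy_kernel_real_neg using m x0 p by (intro divide_right_mono) auto
    also have "\<dots> = m * (x / x powr (\<alpha> + 1))"
      by simp
    also have "\<dots> = levy_majorant m x"
      using False x0 by (simp add: levy_majorant_def div_powr_add_one)
    finally show ?thesis .
  qed
qed

lemma majorant_div_exp1_le_levy_kernel_real:
  assumes m: "1 \<le> m" and x: "x \<in> {0<..1}"
  shows "levy_majorant m x / exp 1 \<le> levy_kernel_real (-m) x"
proof -
  have x0: "0 < x" and m0: "0 < m" and p: "0 < x powr (\<alpha> + 1)"
    using x m by auto
  show ?thesis
  proof (cases "x \<le> 1 / m")
    case True
    then have "m * x \<le> 1"
      using m0 by (simp add: field_simps)
    then have "((m * x)\<^sup>2 / exp 1) / x powr (\<alpha> + 1) \<le> levy_kernel_real (-m) x"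
      unfolding levy_kernel_real_neg using sq_div_exp1_le_exp_neg_sub_one_add[of "m * x"] m0 x0 p
      by (intro divide_right_mono) auto
    moreover have "((m * x)\<^sup>2 / exp 1) / x powr (\<alpha> + 1) = levy_majorant m x / exp 1"
      using True x0 by (simp add: levy_majorant_def power_mult_distrib power2_div_powr_add_one[symmetric])
    ultimately show ?thesis
      by simp
  next
    case False
    then have "1 \<le> m * x"
      using m0 by (simp add: field_simps)
    then have "((m * x) / exp 1) / x powr (\<alpha> + 1) \<le> levy_kernel_real (-m) x"
      unfolding levy_kernel_real_neg using div_exp1_le_exp_neg_sub_one_add[of "m * x"] p
      by (intro divide_right_mono) auto
    moreover have "((m * x) / exp 1) / x powr (\<alpha> + 1) = levy_majorant m x / exp 1"
      using False x0 by (simp add: levy_majorant_def div_powr_add_one[symmetric])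
    ultimately show ?thesis
      by simp
  qed
qed

lemma cgf_real_neg_le:
  assumes "1 \<le> m"
  shows "cgf_real (-m) \<le> A\<^sub>\<alpha> * m powr \<alpha> - m / (\<alpha> - 1)"
proof -
  have "cgf_real (-m) \<le> integral {0<..1} (levy_majorant m)"
    unfolding cgf_real_eq_integral(2)
    using has_integral_levy_majorant[OF assms] levy_kernel_real_le_majorant[OF assms]
    by (intro integral_le cgf_real_eq_integral(1)) auto
  then show ?thesis
    using integral_unique[OF has_integral_levy_majorant[OF assms]] by simp
qed

lemma cgf_real_neg_ge:
  assumes "1 \<le> m"
  shows "(A\<^sub>\<alpha> * m powr \<alpha> - m / (\<alpha> - 1)) / exp 1 \<le> cgf_real (-m)"
proof -
  have I: "((\<lambda>x. levy_majorant m x / exp 1) has_integral ((A\<^sub>\<alpha> * m powr \<alpha> - m / (\<alpha> - 1)) / exp 1)) {0<..1}"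
    using has_integral_divide[OF has_integral_levy_majorant[OF assms]] .
  have "integral {0<..1} (\<lambda>x. levy_majorant m x / exp 1) \<le> cgf_real (-m)"
    unfolding cgf_real_eq_integral(2)
    using I majorant_div_exp1_le_levy_kernel_real[OF assms]
    by (intro integral_le cgf_real_eq_integral(1)) auto
  then show ?thesis
    using integral_unique[OF I] by simp
qed

lemma A_pos: "0 < A\<^sub>\<alpha>"
  unfolding A\<^sub>\<alpha>_def using alpha_gt_1 alpha_lt_2 by (intro add_pos_pos) simp_all

lemma alpha_div_eq: "\<alpha> / (\<alpha> - 1) = 1 / (\<alpha> - 1) + 1"
  using alpha_gt_1 by (simp add: field_simps)

lemma powr_alpha_eq: "0 < l \<Longrightarrow> l powr \<alpha> = l powr (\<alpha> - 1) * l"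
  using powr_add[of l "\<alpha> - 1" 1] by simp

lemma level_powr:
  assumes w: "A\<^sub>\<alpha> \<le> w"
  defines "l \<equiv> (w / A\<^sub>\<alpha>) powr (1 / (\<alpha> - 1))"
  shows level_ge_one: "1 \<le> l" and level_powr_alpha: "A\<^sub>\<alpha> * l powr \<alpha> = w * l"
proof -
  have r: "1 \<le> w / A\<^sub>\<alpha>"
    using w A_pos by simp
  then show l: "1 \<le> l"
    unfolding l_def using alpha_gt_1 by (intro ge_one_powr_ge_zero) auto
  have "0 < w"
    using w A_pos by simp
  then have "l powr (\<alpha> - 1) = w / A\<^sub>\<alpha>"
    using A_pos alpha_gt_1 by (simp add: l_def powr_powr)
  then show "A\<^sub>\<alpha> * l powr \<alpha> = w * l"
    using l A_pos by (simp add: powr_alpha_eq)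
qed

lemma chernoff_bound_large_y:
  assumes large: "A\<^sub>\<alpha> \<le> w" and w: "w = (y + 1 / (\<alpha> - 1)) / 2"
  defines "l \<equiv> (w / A\<^sub>\<alpha>) powr (1 / (\<alpha> - 1))"
  shows "- l * y + cgf_real (-l) \<le> - (w * l)"
proof -
  have l: "1 \<le> l"
    unfolding l_def using large by (rule level_ge_one)
  have "- l * y + cgf_real (-l) \<le> - l * y + (w * l - l / (\<alpha> - 1))"
    using cgf_real_neg_le[OF l] level_powr_alpha[OF large] by (simp add: l_def)
  also have "\<dots> = - (w * l)"
    by (simp add: w field_simps)
  finally show ?thesis .
qed

lemma chernoff_bound_small_y:
  assumes y: "2 / (2 - \<alpha>) \<le> y" and small: "y + 1 / (\<alpha> - 1) < 2 * A\<^sub>\<alpha>"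
  shows "- ((2 - \<alpha>) * y) * y + cgf_real (- ((2 - \<alpha>) * y))
    \<le> - ((y + 1 / (\<alpha> - 1)) / 2 * ((y + 1 / (\<alpha> - 1)) / (2 * A\<^sub>\<alpha>)) powr (1 / (\<alpha> - 1)))"
proof -
  define p q where "p = 1 / (\<alpha> - 1)" and "q = 1 / (2 - \<alpha>)"
  have p: "1 < p" and q: "1 < q" and A: "A\<^sub>\<alpha> = q + p"
    using alpha_gt_1 alpha_lt_2 by (simp_all add: p_def q_def A\<^sub>\<alpha>_def)
  have yq: "2 * q \<le> y"
    using y by (simp add: q_def)
  have "- ((2 - \<alpha>) * y) * y + cgf_real (- ((2 - \<alpha>) * y))
      \<le> - ((2 - \<alpha>) * y) * y + ((2 - \<alpha>) * y)\<^sup>2 / (2 * (2 - \<alpha>))"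
    using cgf_real_neg_le_quadratic[of "(2 - \<alpha>) * y"] yq q alpha_lt_2 by simp
  also have "\<dots> = - (y\<^sup>2 / (2 * q))"
    using alpha_lt_2 by (simp add: q_def power2_eq_square field_simps)
  also have "\<dots> \<le> - y"
    using yq q by (simp add: power2_eq_square field_simps mult_right_mono)
  also have "\<dots> \<le> - ((y + p) / 2 * ((y + p) / (2 * (q + p))) powr p)"
    using half_mult_powr_le[OF p q yq] small A by (simp add: p_def)
  finally show ?thesis
    using A by (simp add: p_def)
qed

lemma chernoff_exponent:
  assumes y: "2 / (2 - \<alpha>) \<le> y"
  shows "\<exists>l\<ge>0. - l * y + cgf_real (-l)
           \<le> - (((1/2) * (y + 1 / (\<alpha> - 1))) powr (\<alpha> / (\<alpha> - 1)) / A\<^sub>\<alpha> powr (1 / (\<alpha> - 1)))"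
proof -
  define p z where "p = 1 / (\<alpha> - 1)" and "z = y + p"
  have y0: "0 < y"
    using y alpha_lt_2 by (smt (verit) divide_pos_pos)
  have z: "0 < z"
    using y0 alpha_gt_1 by (simp add: z_def p_def add_pos_pos)
  have "((1/2) * z) powr (p + 1) / A\<^sub>\<alpha> powr p = z / 2 * (z / 2 / A\<^sub>\<alpha>) powr p"
    using z A_pos by (simp add: powr_add powr_divide powr_mult mult.commute)
  then have target: "((1/2) * (y + 1 / (\<alpha> - 1))) powr (\<alpha> / (\<alpha> - 1)) / A\<^sub>\<alpha> powr (1 / (\<alpha> - 1))
      = z / 2 * (z / 2 / A\<^sub>\<alpha>) powr p"
    by (simp add: alpha_div_eq z_def p_def)
  show ?thesis
  proof (cases "A\<^sub>\<alpha> \<le> z / 2")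
    case True
    then show ?thesis
      using chernoff_bound_large_y[OF True] unfolding target z_def p_def
      by (intro exI[of _ "((y + 1 / (\<alpha> - 1)) / 2 / A\<^sub>\<alpha>) powr (1 / (\<alpha> - 1))"]) simp
  next
    case False
    \<comment> \<open>for small \<open>y\<close> the quadratic bound on \<open>cgf_real\<close> at \<open>l = (2 - \<alpha>) y\<close> suffices\<close>
    then show ?thesis
      using chernoff_bound_small_y[OF y] y0 alpha_lt_2 unfolding target z_def p_def
      by (intro exI[of _ "(2 - \<alpha>) * y"]) simp
  qed
qed

lemma cgf_real_neg_div_ge:
  assumes l: "1 \<le> l" and y: "2 \<le> y" and w: "y + 1 / (\<alpha> - 1) \<le> w"
    and level: "A\<^sub>\<alpha> * l powr \<alpha> = w * l"
  shows "(1 / exp 1 - 1/4) * y \<le> (cgf_real (-l) - 1/2) / l"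
proof -
  have "l * y \<le> l * (w - 1 / (\<alpha> - 1))"
    using w l by (intro mult_left_mono) auto
  also have "\<dots> = A\<^sub>\<alpha> * l powr \<alpha> - l / (\<alpha> - 1)"
    by (simp add: level algebra_simps)
  finally have "l * y / exp 1 \<le> cgf_real (-l)"
    using cgf_real_neg_ge[OF l] by (smt (verit) divide_right_mono exp_gt_zero)
  moreover have "2 \<le> l * y"
    using mult_mono[OF l y] l by simp
  moreover have "(1 / exp 1 - 1/4) * y * l = l * y / exp 1 - l * y / 4"
    by (simp add: algebra_simps)
  ultimately have "(1 / exp 1 - 1/4) * y * l \<le> cgf_real (-l) - 1/2"
    by linarith
  then show ?thesis
    using l by (simp add: field_simps)
qed

lemma cgf_real_second_difference_le:
  assumes l: "1 \<le> l"
  shows "cgf_real (-(2 * l)) - 2 * cgf_real (-l) \<le> (4 - 2 / exp 1) * (A\<^sub>\<alpha> * l powr \<alpha>)"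
proof -
  have pow2: "(2 * l) powr \<alpha> \<le> 4 * l powr \<alpha>"
  proof -
    have "(2::real) powr \<alpha> \<le> 2 powr 2"
      using alpha_lt_2 by (intro powr_mono) auto
    then show ?thesis
      using l by (simp add: powr_mult mult_right_mono)
  qed
  define a b where "a = A\<^sub>\<alpha> * l powr \<alpha>" and "b = l / (\<alpha> - 1)"
  have "cgf_real (-(2 * l)) \<le> A\<^sub>\<alpha> * (2 * l) powr \<alpha> - 2 * l / (\<alpha> - 1)"
    using cgf_real_neg_le[of "2 * l"] l by simp
  also have "\<dots> \<le> 4 * a - 2 * b"
    using pow2 A_pos by (simp add: a_def b_def)
  finally have "cgf_real (-(2 * l)) \<le> 4 * a - 2 * b" .
  moreover have "a / exp 1 - b / exp 1 \<le> cgf_real (-l)"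
    using cgf_real_neg_ge[OF l] by (simp add: a_def b_def diff_divide_distrib)
  moreover have "b / exp 1 \<le> b"
    using l alpha_gt_1 by (simp add: b_def divide_le_eq)
  moreover have "(4 - 2 / exp 1) * a = 4 * a - 2 * (a / exp 1)"
    by (simp add: algebra_simps)
  ultimately show ?thesis
    unfolding a_def[symmetric] by linarith
qed

lemma paley_zygmund_exponent:
  assumes y: "2 / (2 - \<alpha>) \<le> y"
  shows "\<exists>l\<ge>1. (1 / exp 1 - 1/4) * y \<le> (cgf_real (-l) - 1/2) / l \<and>
     cgf_real (-(2 * l)) - 2 * cgf_real (-l)
       \<le> (sqrt (4 - 2 / exp 1) * (y + 1 / (\<alpha> - 1))) powr (\<alpha> / (\<alpha> - 1)) / A\<^sub>\<alpha> powr (1 / (\<alpha> - 1))"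
proof -
  define p z D where "p = 1 / (\<alpha> - 1)" and "z = y + p" and "D = 4 - 2 / exp (1::real)"
  \<comment> \<open>\<open>c\<close> is chosen so that \<open>D * c powr (p + 1) = sqrt D powr (p + 1)\<close>\<close>
  define c where "c = D powr ((p - 1) / (2 * (p + 1)))"
  define l where "l = (c * z / A\<^sub>\<alpha>) powr p"
  have p: "1 < p"
    using alpha_gt_1 alpha_lt_2 by (simp add: p_def)
  have "1 \<le> 1 / (2 - \<alpha>)"
    using alpha_gt_1 alpha_lt_2 by simp
  moreover have "2 * (1 / (2 - \<alpha>)) \<le> y"
    using y by simp
  ultimately have y2: "2 \<le> y" and zA: "A\<^sub>\<alpha> \<le> z"
    by (auto simp: A\<^sub>\<alpha>_def z_def p_def)
  have "2 / exp 1 \<le> (1::real)"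
    using exp_ge_add_one_self[of "1::real"] by simp
  then have D: "3 \<le> D"
    by (simp add: D_def)
  have c: "1 \<le> c"
    unfolding c_def using D p by (intro ge_one_powr_ge_zero) auto
  have "0 \<le> z"
    using zA A_pos by simp
  then have czA: "A\<^sub>\<alpha> \<le> c * z"
    using zA mult_right_mono[OF c] by fastforce
  have l: "1 \<le> l" and level: "A\<^sub>\<alpha> * l powr \<alpha> = c * z * l"
    unfolding l_def p_def using level_powr[OF czA] by simp_all
  have first: "(1 / exp 1 - 1/4) * y \<le> (cgf_real (-l) - 1/2) / l"
    using c zA A_pos by (intro cgf_real_neg_div_ge[OF l y2 _ level]) (simp add: z_def p_def)
  have "D * (A\<^sub>\<alpha> * l powr \<alpha>) = (sqrt D * z) powr (p + 1) / A\<^sub>\<alpha> powr p"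
    unfolding level using sqrt_mult_powr_eq[of D z "A\<^sub>\<alpha>" p] D zA A_pos p by (simp add: c_def l_def)
  then have "cgf_real (-(2 * l)) - 2 * cgf_real (-l) \<le> (sqrt D * z) powr (p + 1) / A\<^sub>\<alpha> powr p"
    using cgf_real_second_difference_le[OF l] by (simp add: D_def)
  then show ?thesis
    using l first by (intro exI[of _ l]) (simp add: alpha_div_eq D_def z_def p_def)
qed

end

section \<open>Exponential moments\<close>

interpretation std_normal: real_distribution std_normal_distribution
  by (rule real_dist_normal_dist)

locale truncated_stable_law = truncated_stable +
  fixes \<mu> :: "real measure"
  assumes real_distribution: "real_distribution \<mu>"
    and char_eq: "\<And>t. char \<mu> t = exp (cgf (\<i> * of_real t))"
begin

sublocale \<mu>: real_distribution \<mu>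
  by (rule real_distribution)

lemma continuous_on_exp_cgf: "continuous_on UNIV (\<lambda>s. exp (cgf s))"
  using cgf_holomorphic holomorphic_on_imp_continuous_on continuous_on_exp by blast

lemma borel_measurable_exp_cgf [measurable]: "(\<lambda>s. exp (cgf s)) \<in> borel_measurable borel"
  using continuous_on_exp_cgf by (rule borel_measurable_continuous_onI)

text \<open>The two sides of \<open>E exp (s X) = exp (cgf s)\<close>, evaluated at \<open>s + i d U\<close> for an independent
  standard Gaussian \<open>U\<close> and averaged over \<open>U\<close>; the averaging makes both entire in \<open>s\<close>.\<close>

definition smoothed_mgf :: "real \<Rightarrow> complex \<Rightarrow> complex" where
  "smoothed_mgf d s = (\<integral>u. exp (cgf (s + \<i> * of_real (d * u))) \<partial>std_normal_distribution)"

definition damped_mgf :: "real \<Rightarrow> complex \<Rightarrow> complex" where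
  "damped_mgf d s = (\<integral>x. exp (s * of_real x) * of_real (exp (- (d * x)\<^sup>2 / 2)) \<partial>\<mu>)"

lemma smoothed_mgf_holomorphic: "smoothed_mgf d holomorphic_on UNIV"
  unfolding smoothed_mgf_def
proof (rule holomorphic_on_parametric_integral)
  show "(\<lambda>s. exp (cgf (s + \<i> * of_real (d * u)))) holomorphic_on UNIV" for u
  proof -
    have "cgf holomorphic_on (\<lambda>s. s + \<i> * of_real (d * u)) ` UNIV"
      using cgf_holomorphic by (rule holomorphic_on_subset) simp
    then have "(cgf \<circ> (\<lambda>s. s + \<i> * of_real (d * u))) holomorphic_on UNIV"
      by (intro holomorphic_on_compose holomorphic_intros)
    then show ?thesis
      by (auto simp: o_def intro!: holomorphic_intros)
  qed
  fix R
  obtain C where C: "\<And>u. \<bar>u\<bar> \<le> R \<Longrightarrow> cgf_real u \<le> C"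
    using cgf_real_bounded[of R] by blast
  show "\<exists>G. integrable std_normal_distribution G \<and> (\<forall>x\<in>space std_normal_distribution. \<forall>s. norm s \<le> R \<longrightarrow>
      norm (exp (cgf (s + \<i> * of_real (d * x)))) \<le> G x)"
  proof (intro exI[of _ "\<lambda>_. exp C"] conjI ballI allI impI)
    fix x and s :: complex assume "norm s \<le> R"
    then have "cgf_real (Re s) \<le> C"
      using C abs_Re_le_cmod[of s] by force
    then show "norm (exp (cgf (s + \<i> * of_real (d * x)))) \<le> exp C"
      using norm_exp_cgf_le[of "s + \<i> * of_real (d * x)"] by simp
  qed simp
qed measurable

lemma damped_mgf_holomorphic:
  assumes d: "0 < d"
  shows "damped_mgf d holomorphic_on UNIV"
  unfolding damped_mgf_def
proof (rule holomorphic_on_parametric_integral)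
  show "(\<lambda>x. exp (s * of_real x) * of_real (exp (- (d * x)\<^sup>2 / 2))) \<in> borel_measurable \<mu>"
    for s :: complex
    by (simp add: measurable_cong_sets[OF \<mu>.events_eq_borel refl])
  show "(\<lambda>s. exp (s * of_real x) * of_real (exp (- (d * x)\<^sup>2 / 2))) holomorphic_on UNIV" for x
    by (auto intro!: holomorphic_intros)
  fix R :: real
  show "\<exists>G. integrable \<mu> G \<and> (\<forall>x\<in>space \<mu>. \<forall>s::complex. norm s \<le> R \<longrightarrow>
      norm (exp (s * of_real x) * of_real (exp (- (d * x)\<^sup>2 / 2))) \<le> G x)"
  proof (intro exI[of _ "\<lambda>_. exp (R\<^sup>2 / (2 * d\<^sup>2))"] conjI ballI allI impI)
    fix x :: real and s :: complex assume s: "norm s \<le> R"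
    have "Re s * x \<le> \<bar>Re s\<bar> * \<bar>x\<bar>"
      by (metis abs_ge_self abs_mult)
    also have "\<dots> \<le> R * \<bar>x\<bar>"
      using s abs_Re_le_cmod[of s] by (intro mult_right_mono) auto
    finally have "Re s * x \<le> R * \<bar>x\<bar>" .
    moreover have "R * \<bar>x\<bar> - (d * x)\<^sup>2 / 2 \<le> R\<^sup>2 / (2 * d\<^sup>2)"
      using mult_sub_half_square_le[OF d, of R "\<bar>x\<bar>"] by (simp add: power_mult_distrib)
    ultimately have "Re s * x - (d * x)\<^sup>2 / 2 \<le> R\<^sup>2 / (2 * d\<^sup>2)"
      by linarith
    then show "norm (exp (s * of_real x) * of_real (exp (- (d * x)\<^sup>2 / 2))) \<le> exp (R\<^sup>2 / (2 * d\<^sup>2))"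
      by (simp add: norm_mult exp_add[symmetric])
  qed simp
qed

lemma smoothed_mgf_eq_damped_mgf_imaginary:
  "smoothed_mgf d (\<i> * of_real v) = damped_mgf d (\<i> * of_real v)"
proof -
  interpret P: pair_sigma_finite \<mu> std_normal_distribution
    by unfold_locales
  interpret PP: prob_space "\<mu> \<Otimes>\<^sub>M std_normal_distribution"
    by (rule prob_space_pair) unfold_locales
  define f where "f x u = iexp ((v + d * u) * x)" for x u :: real
  have "case_prod f \<in> borel_measurable (\<mu> \<Otimes>\<^sub>M std_normal_distribution)"
    unfolding f_def
    by (simp add: measurable_cong_sets[OF sets_pair_measure_cong[OF \<mu>.events_eq_borel std_normal.events_eq_borel] refl])
  then have "integrable (\<mu> \<Otimes>\<^sub>M std_normal_distribution) (case_prod f)"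
    by (intro PP.integrable_const_bound[where B=1]) (auto simp: f_def)
  then have "(\<integral>u. (\<integral>x. f x u \<partial>\<mu>) \<partial>std_normal_distribution) = (\<integral>x. (\<integral>u. f x u \<partial>std_normal_distribution) \<partial>\<mu>)"
    by (rule P.Fubini_integral)
  moreover have "(\<integral>x. f x u \<partial>\<mu>) = exp (cgf (\<i> * of_real v + \<i> * of_real (d * u)))" for u
    using char_eq[of "v + d * u"] by (simp add: char_def f_def distrib_left)
  moreover have "(\<integral>u. f x u \<partial>std_normal_distribution)
      = exp (\<i> * of_real v * of_real x) * of_real (exp (- (d * x)\<^sup>2 / 2))" for x
  proof -
    have "f x u = iexp (v * x) * iexp ((d * x) * u)" for u
      by (simp add: f_def exp_add[symmetric] algebra_simps)
    then have "(\<integral>u. f x u \<partial>std_normal_distribution) = iexp (v * x) * char std_normal_distribution (d * x)"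
      by (simp add: char_def)
    then show ?thesis
      by (simp add: char_std_normal_distribution mult_ac)
  qed
  ultimately show ?thesis
    by (simp add: smoothed_mgf_def damped_mgf_def)
qed

lemma smoothed_mgf_eq_damped_mgf:
  assumes d: "0 < d"
  shows "smoothed_mgf d s = damped_mgf d s"
proof -
  have "(\<lambda>s. smoothed_mgf d s - damped_mgf d s) s = 0"
  proof (rule analytic_continuation[where f="\<lambda>s. smoothed_mgf d s - damped_mgf d s" and S=UNIV and U="range (\<lambda>v. \<i> * of_real v)" and \<xi>=0])
    show "(\<lambda>s. smoothed_mgf d s - damped_mgf d s) holomorphic_on UNIV"
      using smoothed_mgf_holomorphic damped_mgf_holomorphic[OF d] by (rule holomorphic_on_diff)
    show "0 islimpt range (\<lambda>v. \<i> * of_real v)"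
      unfolding islimpt_approachable
    proof (intro allI impI)
      fix e :: real assume "0 < e"
      then show "\<exists>x'\<in>range (\<lambda>v. \<i> * of_real v). x' \<noteq> 0 \<and> dist x' 0 < e"
        by (intro bexI[of _ "\<i> * of_real (e / 2)"] rangeI) (auto simp: norm_mult)
    qed
  qed (auto simp: smoothed_mgf_eq_damped_mgf_imaginary)
  then show ?thesis by simp
qed

lemma smoothed_mgf_tendsto:
  assumes d: "d \<longlonglongrightarrow> 0"
  shows "(\<lambda>n. smoothed_mgf (d n) (of_real u)) \<longlonglongrightarrow> exp (cgf (of_real u))"
proof -
  have "(\<lambda>n. smoothed_mgf (d n) (of_real u)) \<longlonglongrightarrow> (\<integral>v. exp (cgf (of_real u)) \<partial>std_normal_distribution)"
    unfolding smoothed_mgf_def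
  proof (rule integral_dominated_convergence[where w="\<lambda>_. exp (cgf_real u)"])
    show "AE v in std_normal_distribution.
        (\<lambda>n. exp (cgf (of_real u + \<i> * of_real (d n * v)))) \<longlonglongrightarrow> exp (cgf (of_real u))"
    proof (rule AE_I2)
      fix v
      have "(\<lambda>n. of_real u + \<i> * of_real (d n * v)) \<longlonglongrightarrow> (of_real u + \<i> * of_real (0 * v) :: complex)"
        by (intro tendsto_intros d)
      then have "(\<lambda>n. of_real u + \<i> * of_real (d n * v)) \<longlonglongrightarrow> (of_real u :: complex)"
        by simp
      moreover have "isCont (\<lambda>s. exp (cgf s)) (of_real u)"
        using continuous_on_exp_cgf by (simp add: continuous_on_eq_continuous_at)
      ultimately show "(\<lambda>n. exp (cgf (of_real u + \<i> * of_real (d n * v)))) \<longlonglongrightarrow> exp (cgf (of_real u))"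
        by (rule isCont_tendsto_compose[rotated])
    qed
    show "AE v in std_normal_distribution. norm (exp (cgf (of_real u + \<i> * of_real (d n * v)))) \<le> exp (cgf_real u)"
      for n
    proof (rule AE_I2)
      fix v
      show "norm (exp (cgf (of_real u + \<i> * of_real (d n * v)))) \<le> exp (cgf_real u)"
        using norm_exp_cgf_le[of "of_real u + \<i> * of_real (d n * v)"] by simp
    qed
  qed simp_all
  then show ?thesis
    using std_normal.prob_space by (simp add: std_normal.space_eq_univ)
qed

lemma damped_moment_tendsto:
  assumes d: "d \<longlonglongrightarrow> 0" and d0: "\<And>n. 0 < d n"
  shows "(\<lambda>n. \<integral>x. exp (u * x) * exp (- (d n * x)\<^sup>2 / 2) \<partial>\<mu>) \<longlonglongrightarrow> exp (cgf_real u)"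
proof -
  have "damped_mgf (d n) (of_real u) = of_real (\<integral>x. exp (u * x) * exp (- (d n * x)\<^sup>2 / 2) \<partial>\<mu>)" for n
  proof -
    have "exp (of_real u * of_real x) * of_real (exp (- (d n * x)\<^sup>2 / 2))
        = complex_of_real (exp (u * x) * exp (- (d n * x)\<^sup>2 / 2))" for x
      by (simp add: exp_of_real flip: of_real_mult)
    then have "damped_mgf (d n) (of_real u) = (\<integral>x. complex_of_real (exp (u * x) * exp (- (d n * x)\<^sup>2 / 2)) \<partial>\<mu>)"
      by (simp only: damped_mgf_def)
    then show ?thesis
      by (simp only: integral_complex_of_real)
  qed
  moreover have "exp (cgf (of_real u)) = of_real (exp (cgf_real u))"
    by (simp add: cgf_of_real exp_of_real)
  ultimately show ?thesis
    using smoothed_mgf_tendsto[OF d, of u]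
    by (simp add: smoothed_mgf_eq_damped_mgf[OF d0] tendsto_of_real_iff)
qed

lemma integrable_damped_moment:
  assumes d: "0 < d"
  shows "integrable \<mu> (\<lambda>x. exp (u * x) * exp (- (d * x)\<^sup>2 / 2))"
proof (rule \<mu>.integrable_const_bound[OF AE_I2])
  show "norm (exp (u * x) * exp (- (d * x)\<^sup>2 / 2)) \<le> exp (u\<^sup>2 / (2 * d\<^sup>2))" for x
    using mult_sub_half_square_le[OF d, of u x] by (simp add: exp_add[symmetric])
qed (simp add: measurable_cong_sets[OF \<mu>.events_eq_borel refl])

lemma nn_integral_exp_mult: "(\<integral>\<^sup>+x. exp (u * x) \<partial>\<mu>) = ennreal (exp (cgf_real u))"
proof -
  define d :: "nat \<Rightarrow> real" where "d n = 1 / Suc n" for n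
  define k where "k n x = exp (u * x) * exp (- (d n * x)\<^sup>2 / 2)" for n x
  have d0: "0 < d n" for n
    by (simp add: d_def)
  have d: "d \<longlonglongrightarrow> 0"
    unfolding d_def using LIMSEQ_inverse_real_of_nat by (simp add: inverse_eq_divide)
  \<comment> \<open>the damped moments increase to the moment by monotone convergence, and their limit is known\<close>
  have "(\<lambda>n. \<integral>\<^sup>+x. k n x \<partial>\<mu>) \<longlonglongrightarrow> (\<integral>\<^sup>+x. exp (u * x) \<partial>\<mu>)"
  proof (rule nn_integral_LIMSEQ)
    show "incseq (\<lambda>n x. ennreal (k n x))"
    proof (intro incseq_SucI le_funI ennreal_leI)
      fix n x
      have "d (Suc n) \<le> d n"
        by (simp add: d_def frac_le)
      then have "(d (Suc n) * x)\<^sup>2 \<le> (d n * x)\<^sup>2"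
        using d0[of "Suc n"] by (simp add: power_mult_distrib mult_right_mono power_mono)
      then show "k n x \<le> k (Suc n) x"
        by (simp add: k_def)
    qed
    show "(\<lambda>n. ennreal (k n x)) \<longlonglongrightarrow> ennreal (exp (u * x))" for x
    proof (rule tendsto_ennrealI)
      have "(\<lambda>n. k n x) \<longlonglongrightarrow> exp (u * x) * exp (- (0 * x)\<^sup>2 / 2)"
        unfolding k_def by (intro tendsto_intros d) simp_all
      then show "(\<lambda>n. k n x) \<longlonglongrightarrow> exp (u * x)"
        by simp
    qed
  qed (simp add: k_def measurable_cong_sets[OF \<mu>.events_eq_borel refl])
  moreover have "(\<integral>\<^sup>+x. k n x \<partial>\<mu>) = ennreal (\<integral>x. k n x \<partial>\<mu>)" for n
    unfolding k_def by (rule nn_integral_eq_integral[OF integrable_damped_moment[OF d0]]) simp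
  moreover have "(\<lambda>n. ennreal (\<integral>x. k n x \<partial>\<mu>)) \<longlonglongrightarrow> ennreal (exp (cgf_real u))"
    unfolding k_def using damped_moment_tendsto[OF d d0] by (rule tendsto_ennrealI)
  ultimately show ?thesis
    by (simp add: LIMSEQ_unique)
qed

lemma
  shows integrable_exp_mult: "integrable \<mu> (\<lambda>x. exp (u * x))"
    and integral_exp_mult: "(\<integral>x. exp (u * x) \<partial>\<mu>) = exp (cgf_real u)"
  using nn_integral_eq_integrable[THEN iffD1, OF _ _ _ nn_integral_exp_mult]
  by (simp_all add: measurable_cong_sets[OF \<mu>.events_eq_borel refl])

section \<open>Tail bounds\<close>

lemma lower_tail_le:
  assumes y: "2 / (2 - \<alpha>) \<le> y"
  shows "measure \<mu> {..-y}
    \<le> exp (- (((1/2) * (y + 1 / (\<alpha> - 1))) powr (\<alpha> / (\<alpha> - 1)) / A\<^sub>\<alpha> powr (1 / (\<alpha> - 1))))"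
proof -
  obtain l where l: "0 \<le> l" and exponent: "- l * y + cgf_real (-l)
      \<le> - (((1/2) * (y + 1 / (\<alpha> - 1))) powr (\<alpha> / (\<alpha> - 1)) / A\<^sub>\<alpha> powr (1 / (\<alpha> - 1)))"
    using chernoff_exponent[OF y] by blast
  have "measure \<mu> {..-y} = (\<integral>x. indicator {..-y} x \<partial>\<mu>)"
    by simp
  also have "\<dots> \<le> (\<integral>x. exp ((-l) * x) * exp (- l * y) \<partial>\<mu>)"
  proof (rule integral_mono)
    show "integrable \<mu> (\<lambda>x. exp ((-l) * x) * exp (- l * y))"
      using integrable_exp_mult[of "-l"] by simp
    show "indicator {..-y} x \<le> exp ((-l) * x) * exp (- l * y)" for x
    proof (cases "x \<le> -y")
      case True
      then have "0 \<le> l * (- x - y)"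
        using l by simp
      then show ?thesis
        using True by (simp add: exp_add[symmetric] algebra_simps)
    qed simp
  qed (simp add: \<mu>.emeasure_eq_measure)
  also have "\<dots> = (\<integral>x. exp ((-l) * x) \<partial>\<mu>) * exp (- l * y)"
    by (rule integral_mult_left_zero)
  also have "\<dots> = exp (cgf_real (-l)) * exp (- l * y)"
    by (simp only: integral_exp_mult)
  also have "\<dots> = exp (- l * y + cgf_real (-l))"
    by (simp only: exp_add mult.commute)
  also have "\<dots> \<le> exp (- (((1/2) * (y + 1 / (\<alpha> - 1))) powr (\<alpha> / (\<alpha> - 1)) / A\<^sub>\<alpha> powr (1 / (\<alpha> - 1))))"
    using exponent by simp
  finally show ?thesis .
qed

lemma paley_zygmund_exp_mult:
  assumes \<theta>: "0 \<le> \<theta>" "\<theta> < 1"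
  shows "(1 - \<theta>)\<^sup>2 * exp (2 * cgf_real (-l) - cgf_real (-(2 * l)))
    \<le> measure \<mu> {x. \<theta> * exp (cgf_real (-l)) < exp (- (l * x))}"
proof -
  define Y where "Y x = exp ((-l) * x)" for x
  have Y2: "(Y x)\<^sup>2 = exp ((-(2 * l)) * x)" for x
    by (simp add: Y_def power2_eq_square exp_add[symmetric])
  have EY: "(\<integral>x. Y x \<partial>\<mu>) = exp (cgf_real (-l))"
    unfolding Y_def by (rule integral_exp_mult)
  have EY2: "(\<integral>x. (Y x)\<^sup>2 \<partial>\<mu>) = exp (cgf_real (-(2 * l)))"
    unfolding Y2 by (rule integral_exp_mult)
  have "(1 - \<theta>)\<^sup>2 * (\<integral>x. Y x \<partial>\<mu>)\<^sup>2 / (\<integral>x. (Y x)\<^sup>2 \<partial>\<mu>)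
      \<le> measure \<mu> {x \<in> space \<mu>. \<theta> * (\<integral>x. Y x \<partial>\<mu>) < Y x}"
  proof (rule \<mu>.paley_zygmund[OF _ _ \<theta>])
    show "Y \<in> borel_measurable \<mu>"
      unfolding Y_def by (simp add: measurable_cong_sets[OF \<mu>.events_eq_borel refl])
    show "integrable \<mu> (\<lambda>x. (Y x)\<^sup>2)"
      unfolding Y2 by (rule integrable_exp_mult)
    show "0 < (\<integral>x. Y x \<partial>\<mu>)"
      by (simp add: EY)
  qed
  then show ?thesis
    unfolding EY EY2 by (simp add: Y_def power2_eq_square exp_diff flip: exp_add)
qed

lemma lower_tail_ge:
  assumes y: "2 / (2 - \<alpha>) \<le> y"
  shows "(1 - 1 / sqrt (exp 1))\<^sup>2
      * exp (- ((sqrt (4 - 2 / exp 1) * (y + 1 / (\<alpha> - 1))) powr (\<alpha> / (\<alpha> - 1)) / A\<^sub>\<alpha> powr (1 / (\<alpha> - 1))))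
    \<le> measure \<mu> {..- ((1 / exp 1 - 1/4) * y)}"
proof -
  define B where "B = (sqrt (4 - 2 / exp 1) * (y + 1 / (\<alpha> - 1))) powr (\<alpha> / (\<alpha> - 1)) / A\<^sub>\<alpha> powr (1 / (\<alpha> - 1))"
  obtain l where l: "1 \<le> l" and mean: "(1 / exp 1 - 1/4) * y \<le> (cgf_real (-l) - 1/2) / l"
      and second: "cgf_real (-(2 * l)) - 2 * cgf_real (-l) \<le> B"
    using paley_zygmund_exponent[OF y] unfolding B_def by blast
  define \<theta> :: real where "\<theta> = exp (- 1/2)"
  have "sqrt (exp 1) = exp (1/2 :: real)"
    by (rule real_sqrt_unique) (simp_all add: power2_eq_square exp_add[symmetric])
  then have sqrt_e: "1 / sqrt (exp 1) = \<theta>"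
    by (simp add: \<theta>_def exp_minus inverse_eq_divide)
  have "exp (- B) \<le> exp (2 * cgf_real (-l) - cgf_real (-(2 * l)))"
    using second by simp
  then have "(1 - 1 / sqrt (exp 1))\<^sup>2 * exp (- B) \<le> (1 - \<theta>)\<^sup>2 * exp (2 * cgf_real (-l) - cgf_real (-(2 * l)))"
    unfolding sqrt_e by (rule mult_left_mono) simp
  also have "\<dots> \<le> measure \<mu> {x. \<theta> * exp (cgf_real (-l)) < exp (- (l * x))}"
    by (rule paley_zygmund_exp_mult) (simp_all add: \<theta>_def)
  also have "\<dots> \<le> measure \<mu> {..- ((1 / exp 1 - 1/4) * y)}"
  proof (rule \<mu>.finite_measure_mono)
    show "{x. \<theta> * exp (cgf_real (-l)) < exp (- (l * x))} \<subseteq> {..- ((1 / exp 1 - 1/4) * y)}"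
    proof safe
      fix x assume "\<theta> * exp (cgf_real (-l)) < exp (- (l * x))"
      then have "- 1/2 + cgf_real (-l) < - (l * x)"
        by (simp add: \<theta>_def exp_add[symmetric])
      then have "x < - ((cgf_real (-l) - 1/2) / l)"
        using l by (simp add: field_simps)
      also have "\<dots> \<le> - ((1 / exp 1 - 1/4) * y)"
        using mean by simp
      finally show "x \<le> - ((1 / exp 1 - 1/4) * y)"
        by simp
    qed
  qed simp
  finally show ?thesis
    by (simp add: B_def)
qed

end

theorem lemma11:
  fixes M :: "'a measure" and X :: "'a \<Rightarrow> real" and \<alpha> y :: real
  assumes "prob_space M"
    and "X \<in> borel_measurable M"
    and "1 < \<alpha>" and "\<alpha> < 2"
    and "\<And>t. char (distr M borel X) t =
           exp (CLBINT x:{0<..1}. (iexp (t * x) - 1 - \<i> * complex_of_real (t * x))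
                                   / complex_of_real (x powr (\<alpha> + 1)))"
    and "y \<ge> 2 / (2 - \<alpha>)"
  shows "measure M {\<omega> \<in> space M. X \<omega> \<le> - y}
           \<le> exp (- (((1/2) * (y + 1 / (\<alpha> - 1))) powr (\<alpha> / (\<alpha> - 1))
                    / ((1 / (2 - \<alpha>) + 1 / (\<alpha> - 1)) powr (1 / (\<alpha> - 1)))))
    \<and> measure M {\<omega> \<in> space M. X \<omega> \<le> - ((1 / exp 1 - 1/4) * y)}
           \<ge> (1 - 1 / sqrt (exp 1))\<^sup>2
              * exp (- ((sqrt (4 - 2 / exp 1) * (y + 1 / (\<alpha> - 1))) powr (\<alpha> / (\<alpha> - 1))
                    / ((1 / (2 - \<alpha>) + 1 / (\<alpha> - 1)) powr (1 / (\<alpha> - 1)))))"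
proof -
  interpret M: prob_space M
    by fact
  have "truncated_stable \<alpha>"
    using assms(3,4) by unfold_locales
  then interpret truncated_stable \<alpha> .
  interpret truncated_stable_law \<alpha> "distr M borel X"
  proof (intro truncated_stable_law.intro truncated_stable_law_axioms.intro)
    show "truncated_stable \<alpha>"
      by fact
    show "real_distribution (distr M borel X)"
      using assms(2) by (rule M.real_distribution_distr)
    show "char (distr M borel X) t = exp (cgf (\<i> * of_real t))" for t
      using assms(5)[of t] by (simp add: cgf_def levy_kernel_def mult_ac)
  qed
  have "measure M {\<omega> \<in> space M. X \<omega> \<le> c} = measure (distr M borel X) {..c}" for c
    using assms(2) by (subst measure_distr) (auto intro!: arg_cong[where f="measure M"])
  then show ?thesis
    using lower_tail_le[OF assms(6)] lower_tail_ge[OF assms(6)] by (simp add: A\<^sub>\<alpha>_def)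
qed

end
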